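(* Let $M^\star\in\mathbb{R}^{n\times n}$ with $M^\star\succeq0$ and $r^\star=\operatorname{rank}(M^\star)\ge1$, and suppose $X\in\mathbb{R}^{n\times r}$ satisfies $0<\|XX^T-M^\star\|_F\le\rho\,\lambda_{r^\star}(M^\star)$ with $\rho\le1/\sqrt2$. Define the incidence angle $\theta\in[0,\pi/2]$ by \[ \cos\theta=\max_{Y\in\mathbb{R}^{n\times r}}\frac{\langle XX^T-M^\star,XY^T+YX^T\rangle}{\|XX^T-M^\star\|_F\,\|XY^T+YX^T\|_F}. \] Then \[ \sin\theta=\frac{\|(I-XX^\dagger)M^\star(I-XX^\dagger)\|_F}{\|XX^T-M^\star\|_F}\le\frac1{\sqrt2}\frac{\rho}{\sqrt{1-\rho^2}}, \] where $\dagger$ denotes the Moore–Penrose pseudoinverse.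
   Context: Eigenvalues are ordered decreasingly, so $\lambda_{r^\star}(M^\star)$ is the smallest nonzero eigenvalue of $M^\star$. $\langle A,B\rangle=\operatorname{tr}(A^TB)$. The maximum is over $Y$ with $XY^T+YX^T\ne0$. *)

theory Defs
  imports "HOL-Analysis.Analysis"
begin

definition frob_inner :: "real^'c^'r \<Rightarrow> real^'c^'r \<Rightarrow> real" where
  "frob_inner A B = (\<Sum>i\<in>UNIV. \<Sum>j\<in>UNIV. A$i$j * B$i$j)"

definition frob_norm :: "real^'c^'r \<Rightarrow> real" where
  "frob_norm A = sqrt (frob_inner A A)"

definition psd :: "real^'n^'n \<Rightarrow> bool" where
  "psd M \<longleftrightarrow> transpose M = M \<and> (\<forall>x. x \<bullet> (M *v x) \<ge> 0)"

text \<open>Eigenvalues of a square matrix, and the smallest nonzero eigenvalue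
  (for a PSD matrix of rank r this is lambda_r with eigenvalues ordered decreasingly).\<close>
definition eigenvalues :: "real^'n^'n \<Rightarrow> real set" where
  "eigenvalues M = {l. \<exists>v. v \<noteq> 0 \<and> M *v v = l *\<^sub>R v}"

definition min_nonzero_eigenvalue :: "real^'n^'n \<Rightarrow> real" where
  "min_nonzero_eigenvalue M = Min (eigenvalues M - {0})"

definition is_pinv :: "real^'c^'r \<Rightarrow> real^'r^'c \<Rightarrow> bool" where
  "is_pinv A Z \<longleftrightarrow> A ** Z ** A = A \<and> Z ** A ** Z = Z \<and>
     transpose (A ** Z) = A ** Z \<and> transpose (Z ** A) = Z ** A"

definition pinv :: "real^'c^'r \<Rightarrow> real^'r^'c" where
  "pinv A = (THE Z. is_pinv A Z)"

end

(*
  Write E = X X^T - M*, let P = X X^+ be the orthogonal projection onto the column space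
  of X and Q = I - P.  Every tangent direction S = X Y^T + Y X^T satisfies Q S Q = 0,
  while E - Q E Q = P E + E P - P E P is itself tangent; hence the maximal cosine is
  attained at S = E - Q E Q, cos theta = |E - Q E Q| / |E| and, by Pythagoras,
  sin theta = |Q E Q| / |E| = |Q M* Q| / |E| because Q X = 0.

  For the bound put c = |Q M* Q|, b = |P M* Q| and d = |E|.  The blocks of E give
  2 b^2 + c^2 <= d^2.  On the other hand lambda_r* (Q M* Q) <= Q M*^2 Q = B^T B + C^2
  (C = Q M* Q, B = P M* Q) in the Loewner order, and pairing with the PSD matrix C gives
  lambda c^2 <= c b^2 + c^3.  Together with d <= rho lambda this yields
  2 t <= rho (1 + t^2) for t = c / d <= 1, so t lies below the smaller root
  rho / (1 + sqrt (1 - rho^2)) <= rho / (sqrt 2 sqrt (1 - rho^2)).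
*)
theory Submission
  imports Defs
begin

section \<open>Frobenius inner product of matrices\<close>

lemma frob_inner_eq_inner: "frob_inner A B = inner A B"
  by (simp add: frob_inner_def inner_vec_def)

lemma frob_norm_eq_norm: "frob_norm A = norm A"
  by (simp add: frob_norm_def frob_inner_eq_inner norm_eq_sqrt_inner)

lemma matrix_mul_add_rdistrib: "((A::real^'b^'a) + B) ** (C::real^'c^'b) = A ** C + B ** C"
  by (vector matrix_matrix_mult_def sum.distrib distrib_right)

lemma matrix_mul_diff_rdistrib: "((A::real^'b^'a) - B) ** (C::real^'c^'b) = A ** C - B ** C"
  by (vector matrix_matrix_mult_def sum_subtractf left_diff_distrib)

lemma matrix_mul_diff_ldistrib: "(A::real^'b^'a) ** ((B::real^'c^'b) - C) = A ** B - A ** C"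
  by (vector matrix_matrix_mult_def sum_subtractf right_diff_distrib)

lemma transpose_diff: "transpose ((A::real^'b^'a) - B) = transpose A - transpose B"
  by (vector transpose_def)

lemma transpose_zero: "transpose (0::real^'b^'a) = 0"
  by (vector transpose_def)

lemma inner_matrix_vector_transpose: "inner x ((A::real^'b^'a) *v y) = inner (transpose A *v x) y"
  by (simp add: dot_lmul_matrix)

lemma inner_transpose: "inner (transpose (A::real^'b^'a)) (transpose B) = inner A B"
  by (simp add: inner_vec_def transpose_def) (subst sum.swap, simp)

lemma norm_transpose: "norm (transpose (A::real^'b^'a)) = norm A"
  by (simp add: norm_eq_sqrt_inner inner_transpose)

lemma inner_matrix_mul_left:
  "inner ((A::real^'b^'a) ** (B::real^'c^'b)) C = inner B (transpose A ** C)"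
proof -
  have "inner (A ** B) C = (\<Sum>i\<in>UNIV. \<Sum>j\<in>UNIV. \<Sum>k\<in>UNIV. A$i$k * B$k$j * C$i$j)"
    by (simp add: inner_vec_def matrix_matrix_mult_def sum_distrib_right)
  also have "\<dots> = (\<Sum>k\<in>UNIV. \<Sum>j\<in>UNIV. \<Sum>i\<in>UNIV. A$i$k * B$k$j * C$i$j)"
    by (subst sum.swap) (subst (2) sum.swap, subst sum.swap, rule refl)
  also have "\<dots> = inner B (transpose A ** C)"
    by (simp add: inner_vec_def matrix_matrix_mult_def transpose_def sum_distrib_left mult_ac)
  finally show ?thesis .
qed

lemma inner_matrix_mul_right:
  "inner ((A::real^'b^'a) ** (B::real^'c^'b)) C = inner A (C ** transpose B)"
proof -
  have "inner (A ** B) C = inner (transpose B ** transpose A) (transpose C)"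
    by (simp only: inner_transpose[symmetric, of "A ** B"] matrix_transpose_mul)
  also have "\<dots> = inner (transpose A) (transpose (C ** transpose B))"
    by (simp only: inner_matrix_mul_left matrix_transpose_mul transpose_transpose)
  finally show ?thesis
    by (simp only: inner_transpose)
qed

lemma inner_matrix_sandwich:
  "inner ((U::real^'b^'a) ** (A::real^'c^'b) ** (V::real^'d^'c)) B
     = inner A (transpose U ** B ** transpose V)"
  by (simp only: inner_matrix_mul_right[of "U ** A" V B] inner_matrix_mul_left[of U A]
      matrix_mul_assoc)

lemma inner_sandwich_eq_0:
  fixes U :: "real^'b^'a" and V :: "real^'d^'c" and U' :: "real^'e^'a" and V' :: "real^'d^'f"
  assumes "transpose U ** U' = 0 \<or> V' ** transpose V = 0"
  shows "inner (U ** A ** V) (U' ** B ** V') = 0"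
  using assms unfolding inner_matrix_sandwich
  by (auto simp: matrix_mul_assoc) (simp flip: matrix_mul_assoc)

lemma symmetric_if_self_adjoint:
  assumes "\<And>x y. inner x ((A::real^'a^'a) *v y) = inner (A *v x) y"
  shows "transpose A = A"
proof -
  have "transpose A *v x = A *v x" for x
  proof -
    have "inner (transpose A *v x) y = inner (A *v x) y" for y
      using assms[of x y] inner_matrix_vector_transpose[of x A y] by simp
    then show ?thesis using vector_eq_rdot by blast
  qed
  then show ?thesis by (simp add: matrix_eq)
qed

lemma transpose_mult_eq_0:
  fixes Q :: "real^'n^'n" and X :: "real^'r^'n"
  assumes "Q ** X = 0" "transpose Q = Q"
  shows "transpose X ** Q = 0"
proof -
  have "transpose X ** Q = transpose (Q ** X)"
    by (simp add: matrix_transpose_mul assms(2))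
  then show ?thesis
    by (simp add: assms(1) transpose_zero)
qed

lemma matrix_mul_transpose_self_eq_0: "(X::real^'c^'r) ** transpose X = 0 \<longleftrightarrow> X = 0"
proof
  assume XX: "X ** transpose X = 0"
  have "X *v (transpose X *v v) = 0" for v
    using XX by (simp only: matrix_vector_mul_assoc matrix_vector_mult_0)
  then have "(transpose X *v v) \<bullet> (transpose X *v v) = 0" for v
    using inner_matrix_vector_transpose[of v X "transpose X *v v"] by simp
  then have "transpose X *v v = 0" for v
    by simp
  then have "transpose X = 0"
    by (simp add: matrix_eq)
  then show "X = 0"
    by (metis transpose_transpose transpose_zero)
qed (simp add: transpose_zero)

lemma subspace_range_matrix_vector_mult: "subspace (range (\<lambda>x. (A::real^'b^'a) *v x))"
  by (rule real_vector.linear_subspace_image[OF matrix_vector_mul_linear real_vector.subspace_UNIV])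

lemma norm_matrix_vector_mult_le: "norm ((A::real^'b^'a) *v x) \<le> norm A * norm x"
proof -
  have "(norm (A *v x))^2 = (\<Sum>i\<in>UNIV. (inner (A$i) x)^2)"
    unfolding power2_norm_eq_inner inner_vec_def[of "A *v x"] matrix_vector_mul_component
    by (simp add: power2_eq_square)
  also have "\<dots> \<le> (\<Sum>i\<in>UNIV. (norm (A$i))^2 * (norm x)^2)"
  proof (rule sum_mono)
    fix i
    have "\<bar>inner (A$i) x\<bar>^2 \<le> (norm (A$i) * norm x)^2"
      by (rule power_mono[OF Cauchy_Schwarz_ineq2]) simp
    then show "(inner (A$i) x)^2 \<le> (norm (A$i))^2 * (norm x)^2"
      by (simp add: power_mult_distrib)
  qed
  also have "\<dots> = (norm A * norm x)^2"
    by (simp add: power_mult_distrib sum_distrib_right power2_norm_eq_inner inner_vec_def)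
  finally show ?thesis
    by (simp add: power2_le_iff_abs_le)
qed

lemma norm_matrix_mul_le: "norm ((A::real^'b^'a) ** (B::real^'c^'b)) \<le> norm A * norm B"
proof -
  have row: "(A ** B)$i = transpose B *v (A$i)" for i
    by (simp add: vec_eq_iff matrix_matrix_mult_def matrix_vector_mult_def transpose_def mult_ac)
  have "(norm (A ** B))^2 = (\<Sum>i\<in>UNIV. (norm ((A ** B)$i))^2)"
    by (simp add: power2_norm_eq_inner inner_vec_def)
  also have "\<dots> \<le> (\<Sum>i\<in>UNIV. (norm (A$i))^2 * (norm B)^2)"
  proof (rule sum_mono)
    fix i
    have "norm ((A ** B)$i) \<le> norm B * norm (A$i)"
      unfolding row using norm_matrix_vector_mult_le[of "transpose B" "A$i"] norm_transpose[of B]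
      by simp
    then have "(norm ((A ** B)$i))^2 \<le> (norm B * norm (A$i))^2"
      by (rule power_mono) simp
    then show "(norm ((A ** B)$i))^2 \<le> (norm (A$i))^2 * (norm B)^2"
      by (simp add: power_mult_distrib mult.commute)
  qed
  also have "\<dots> = (norm A * norm B)^2"
    by (simp add: power_mult_distrib sum_distrib_right power2_norm_eq_inner inner_vec_def)
  finally show ?thesis
    by (simp add: power2_le_iff_abs_le)
qed

lemma inner_matrix_mul_le:
  "inner C ((A::real^'b^'a) ** (B::real^'c^'b)) \<le> norm C * (norm A * norm B)"
proof -
  have "inner C (A ** B) \<le> norm C * norm (A ** B)"
    by (rule norm_cauchy_schwarz)
  also have "\<dots> \<le> norm C * (norm A * norm B)"
    by (rule mult_left_mono) (simp_all add: norm_matrix_mul_le)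
  finally show ?thesis .
qed

section \<open>Positive semidefinite matrices\<close>

lemma quadratic_nonneg_discriminant:
  fixes a b c :: real
  assumes nonneg: "\<And>t. 0 \<le> c + 2*t*b + t^2*a" and "0 \<le> a"
  shows "b^2 \<le> a*c"
proof (cases "a = 0")
  case True
  have "b = 0"
  proof (rule ccontr)
    assume "b \<noteq> 0"
    then show False using nonneg[of "- (c + 1) / (2*b)"] True by (simp add: field_simps)
  qed
  then show ?thesis using nonneg[of 0] True by simp
next
  case False
  then have "0 < a" using \<open>0 \<le> a\<close> by simp
  then have "0 \<le> c - b^2/a"
    using nonneg[of "- b/a"] by (simp add: field_simps power2_eq_square)
  then show ?thesis using \<open>0 < a\<close> by (simp add: field_simps)
qed

lemma psd_symmetric: "psd A \<Longrightarrow> transpose A = A"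
  by (simp add: psd_def)

lemma psd_nonneg: "psd A \<Longrightarrow> 0 \<le> x \<bullet> (A *v x)"
  by (simp add: psd_def)

lemma psd_self_adjoint: "psd A \<Longrightarrow> x \<bullet> (A *v y) = (A *v x) \<bullet> y"
  by (metis inner_matrix_vector_transpose psd_symmetric)

lemma psd_Cauchy_Schwarz:
  assumes "psd A"
  shows "(x \<bullet> (A *v v))^2 \<le> (v \<bullet> (A *v v)) * (x \<bullet> (A *v x))"
proof (rule quadratic_nonneg_discriminant)
  fix t :: real
  have "v \<bullet> (A *v x) = x \<bullet> (A *v v)"
    using psd_self_adjoint[OF assms, of v x] by (simp add: inner_commute)
  then have "(x + t *\<^sub>R v) \<bullet> (A *v (x + t *\<^sub>R v))
      = x \<bullet> (A *v x) + 2*t*(x \<bullet> (A *v v)) + t^2 * (v \<bullet> (A *v v))"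
    by (simp add: algebra_simps inner_add_left inner_add_right power2_eq_square)
  then show "0 \<le> x \<bullet> (A *v x) + 2*t*(x \<bullet> (A *v v)) + t^2 * (v \<bullet> (A *v v))"
    by (metis psd_nonneg[OF assms])
qed (rule psd_nonneg[OF assms])

lemma psd_form_eq_0_imp_kernel:
  assumes "psd A" "v \<bullet> (A *v v) = 0"
  shows "A *v v = 0"
  using psd_Cauchy_Schwarz[OF assms(1), of "A *v v" v] assms(2) by simp

lemma psd_congruence:
  assumes "psd M"
  shows "psd (transpose R ** M ** R)"
  unfolding psd_def
proof (intro conjI allI)
  show "transpose (transpose R ** M ** R) = transpose R ** M ** R"
    by (simp add: matrix_transpose_mul psd_symmetric[OF assms] matrix_mul_assoc)
  fix x
  have "x \<bullet> ((transpose R ** M ** R) *v x) = x \<bullet> (transpose R *v (M *v (R *v x)))"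
    by (simp only: matrix_vector_mul_assoc[symmetric])
  also have "\<dots> = (R *v x) \<bullet> (M *v (R *v x))"
    by (simp only: inner_matrix_vector_transpose transpose_transpose)
  finally show "0 \<le> x \<bullet> ((transpose R ** M ** R) *v x)"
    using psd_nonneg[OF assms] by simp
qed

definition outer_prod :: "real^'a \<Rightarrow> real^'b \<Rightarrow> real^'b^'a" where
  "outer_prod w u = (\<chi> i j. w$i * u$j)"

lemma outer_prod_mult_vec: "outer_prod w u *v x = (u \<bullet> x) *\<^sub>R w"
  by (simp add: outer_prod_def vec_eq_iff matrix_vector_mult_def inner_vec_def
      sum_distrib_left mult_ac)

lemma inner_outer_prod: "inner (outer_prod w w) (D::real^'a^'a) = w \<bullet> (D *v w)"
  by (simp add: outer_prod_def inner_vec_def matrix_vector_mult_def sum_distrib_left mult_ac)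

lemma transpose_outer_prod: "transpose (outer_prod w w) = outer_prod w w"
  by (simp add: outer_prod_def transpose_def vec_eq_iff mult.commute)

text \<open>A' stays PSD by the Cauchy--Schwarz inequality for the form of A.\<close>
lemma psd_rank_one_deflation:
  fixes A :: "real^'n^'n"
  assumes A: "psd A" and Av: "A *v v \<noteq> 0"
  defines "A' \<equiv> A - (1 / (v \<bullet> (A *v v))) *\<^sub>R outer_prod (A *v v) (A *v v)"
  shows "0 < v \<bullet> (A *v v)" "psd A'" "{x. A *v x = 0} \<subset> {x. A' *v x = 0}"
proof -
  define w where "w = A *v v"
  define \<alpha> where "\<alpha> = v \<bullet> w"
  show \<alpha>_pos: "0 < v \<bullet> (A *v v)"
    using psd_nonneg[OF A, of v] psd_form_eq_0_imp_kernel[OF A, of v] Av by force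
  have A'_mult: "A' *v x = A *v x - ((w \<bullet> x) / \<alpha>) *\<^sub>R w" for x
    by (simp add: A'_def w_def \<alpha>_def algebra_simps outer_prod_mult_vec
        flip: scaleR_matrix_vector_assoc)
  show "psd A'"
    unfolding psd_def
  proof (intro conjI allI)
    show "transpose A' = A'"
      by (simp add: A'_def transpose_diff transpose_scalar transpose_outer_prod psd_symmetric[OF A])
  next
    fix x
    have "(x \<bullet> w)^2 \<le> \<alpha> * (x \<bullet> (A *v x))"
      using psd_Cauchy_Schwarz[OF A, of x v] by (simp add: w_def \<alpha>_def inner_commute)
    then have "0 \<le> x \<bullet> (A *v x) - (x \<bullet> w)^2 / \<alpha>"
      using \<alpha>_pos by (simp add: \<alpha>_def w_def field_simps)
    also have "\<dots> = x \<bullet> (A' *v x)"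
      by (simp add: A'_mult inner_diff_right power2_eq_square inner_commute)
    finally show "0 \<le> x \<bullet> (A' *v x)" .
  qed
  have "w \<bullet> x = 0" if "A *v x = 0" for x
    using psd_self_adjoint[OF A, of v x] that by (simp add: w_def inner_commute)
  then have "{x. A *v x = 0} \<subseteq> {x. A' *v x = 0}"
    by (auto simp: A'_mult)
  moreover have "A' *v v = 0"
    using \<alpha>_pos by (simp add: A'_mult \<alpha>_def w_def inner_commute)
  ultimately show "{x. A *v x = 0} \<subset> {x. A' *v x = 0}"
    using Av by blast
qed

text \<open>Induction on the rank of A: peel off rank-one pieces w w^T, each of which
  contributes w^T D w \<ge> 0.\<close>
lemma inner_psd_nonneg:
  fixes A D :: "real^'n^'n"
  assumes "psd A" and D: "\<And>x. 0 \<le> x \<bullet> (D *v x)"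
  shows "0 \<le> inner A D"
  using assms(1)
proof (induction "CARD('n) - dim {x. A *v x = 0}" arbitrary: A rule: less_induct)
  case less
  show ?case
  proof (cases "A = 0")
    case False
    then obtain v where Av: "A *v v \<noteq> 0"
      by (metis matrix_eq matrix_vector_mult_0)
    define A' where "A' = A - (1 / (v \<bullet> (A *v v))) *\<^sub>R outer_prod (A *v v) (A *v v)"
    note deflation = psd_rank_one_deflation[OF less.prems Av, folded A'_def]
    have kernel: "subspace {x. B *v x = 0}" for B :: "real^'n^'n"
      using real_vector.linear_subspace_kernel[of "\<lambda>x. B *v x"] by simp
    have "dim {x. A *v x = 0} < dim {x. A' *v x = 0}"
      using deflation(3) by (intro dim_psubset) (simp add: span_eq_iff[THEN iffD2, OF kernel])
    moreover have "dim {x. A' *v x = 0} \<le> CARD('n)"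
      using dim_subset_UNIV[of "{x. A' *v x = 0}"] by simp
    ultimately have "0 \<le> inner A' D"
      using less.hyps deflation(2) by simp
    moreover have
      "inner A D = inner A' D + (1 / (v \<bullet> (A *v v))) * ((A *v v) \<bullet> (D *v (A *v v)))"
      by (simp add: A'_def inner_diff_left inner_outer_prod)
    ultimately show ?thesis
      using deflation(1) D by simp
  qed simp
qed

section \<open>The smallest nonzero eigenvalue\<close>

lemma finite_eigenvalues:
  assumes "transpose M = M"
  shows "finite (eigenvalues (M::real^'n^'n))"
proof -
  define ev where "ev l = (SOME v. v \<noteq> 0 \<and> M *v v = l *\<^sub>R v)" for l
  have ev: "ev l \<noteq> 0 \<and> M *v ev l = l *\<^sub>R ev l" if "l \<in> eigenvalues M" for l
  proof -
    have "\<exists>v. v \<noteq> 0 \<and> M *v v = l *\<^sub>R v"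
      using that unfolding eigenvalues_def by simp
    then show ?thesis
      unfolding ev_def by (rule someI_ex)
  qed
  have "inj_on ev (eigenvalues M)"
    by (rule inj_onI) (metis ev scaleR_cancel_right)
  moreover have "pairwise orthogonal (ev ` eigenvalues M)"
    unfolding pairwise_def
  proof (intro ballI impI)
    fix a b assume "a \<in> ev ` eigenvalues M" "b \<in> ev ` eigenvalues M" "a \<noteq> b"
    then obtain l1 l2 where l: "l1 \<in> eigenvalues M" "l2 \<in> eigenvalues M" "a = ev l1" "b = ev l2"
      and "l1 \<noteq> l2" by blast
    have "l1 * (a \<bullet> b) = a \<bullet> (M *v b)"
      using ev[OF l(1)] l(3) inner_matrix_vector_transpose[of a M b] assms by simp
    also have "\<dots> = l2 * (a \<bullet> b)"
      using ev[OF l(2)] l(4) by simp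
    finally show "orthogonal a b"
      using \<open>l1 \<noteq> l2\<close> by (simp add: orthogonal_def)
  qed
  moreover have "0 \<notin> ev ` eigenvalues M"
    using ev by auto
  ultimately show ?thesis
    using pairwise_orthogonal_independent independent_imp_finite finite_imageD by blast
qed

lemma psd_eigenvalue_nonneg:
  assumes "psd M" "l \<in> eigenvalues M"
  shows "0 \<le> l"
proof -
  obtain u where "u \<noteq> 0" "M *v u = l *\<^sub>R u"
    using assms(2) unfolding eigenvalues_def by blast
  then have "0 \<le> l * (u \<bullet> u)" "0 < u \<bullet> u"
    using psd_nonneg[OF assms(1), of u] by simp_all
  then show ?thesis
    by (simp add: zero_le_mult_iff)
qed

lemma Rayleigh_minimum_exists:
  fixes M :: "real^'n^'n"
  assumes "subspace V" "V \<noteq> {0}"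
  obtains v where "v \<in> V" "norm v = 1"
    "\<And>u. u \<in> V \<Longrightarrow> (v \<bullet> (M *v v)) * (norm u)^2 \<le> u \<bullet> (M *v u)"
proof -
  define q where "q x = x \<bullet> (M *v x)" for x
  define K where "K = V \<inter> sphere 0 1"
  have "compact K"
    unfolding K_def by (rule closed_Int_compact[OF closed_subspace[OF assms(1)] compact_sphere])
  moreover obtain x where "x \<in> V" "x \<noteq> 0"
    using assms subspace_0 by blast
  then have "(1 / norm x) *\<^sub>R x \<in> K"
    unfolding K_def using subspace_scale[OF assms(1)] by simp
  then have "K \<noteq> {}" by blast
  moreover have "continuous_on K q"
    unfolding q_def by (intro continuous_intros matrix_vector_mult_linear_continuous_on)
  ultimately obtain v where v: "v \<in> K" "\<And>y. y \<in> K \<Longrightarrow> q v \<le> q y"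
    using continuous_attains_inf by metis
  have "q v * (norm u)^2 \<le> q u" if "u \<in> V" for u
  proof (cases "u = 0")
    case False
    have "(1 / norm u) *\<^sub>R u \<in> K"
      unfolding K_def using False subspace_scale[OF assms(1) that] by simp
    then have "q v \<le> q ((1 / norm u) *\<^sub>R u)"
      by (rule v(2))
    also have "\<dots> = q u / (norm u)^2"
      by (simp add: q_def matrix_vector_mult_scaleR power2_eq_square)
    finally show ?thesis
      using False by (simp add: field_simps)
  qed (simp add: q_def)
  moreover have "v \<in> V" "norm v = 1"
    using v(1) unfolding K_def by auto
  ultimately show ?thesis
    using that unfolding q_def by blast
qed

text \<open>The residual w = M v - \<mu> v lies in V and is orthogonal to v; perturbing v along w
  and using minimality forces w = 0 by the discriminant criterion.\<close>
lemma Rayleigh_minimizer_eigenvector: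
  fixes M :: "real^'n^'n"
  assumes sym: "transpose M = M" and V: "subspace V" "\<And>x. x \<in> V \<Longrightarrow> M *v x \<in> V"
    and v: "v \<in> V" "norm v = 1"
    and min: "\<And>u. u \<in> V \<Longrightarrow> (v \<bullet> (M *v v)) * (norm u)^2 \<le> u \<bullet> (M *v u)"
  shows "M *v v = (v \<bullet> (M *v v)) *\<^sub>R v"
proof -
  define \<mu> where "\<mu> = v \<bullet> (M *v v)"
  define w where "w = M *v v - \<mu> *\<^sub>R v"
  have self_adjoint: "x \<bullet> (M *v y) = (M *v x) \<bullet> y" for x y
    using inner_matrix_vector_transpose[of x M y] sym by simp
  have vv: "v \<bullet> v = 1"
    using v(2) by (simp add: dot_square_norm)
  have wV: "w \<in> V"
    unfolding w_def using V v(1) by (simp add: subspace_diff subspace_scale)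
  have "v \<bullet> w = \<mu> - \<mu> * (v \<bullet> v)"
    by (simp add: w_def \<mu>_def inner_diff_right)
  then have vw: "v \<bullet> w = 0"
    by (simp add: vv)
  have "w \<bullet> w = w \<bullet> (M *v v) - \<mu> * (v \<bullet> w)"
    by (subst (2) w_def) (simp add: inner_diff_right inner_commute)
  then have wMv: "w \<bullet> (M *v v) = w \<bullet> w"
    by (simp add: vw)
  have "(w \<bullet> w)^2 \<le> (w \<bullet> (M *v w) - \<mu> * (w \<bullet> w)) * 0"
  proof (rule quadratic_nonneg_discriminant)
    fix t :: real
    have "\<mu> * (norm (v + t *\<^sub>R w))^2 \<le> (v + t *\<^sub>R w) \<bullet> (M *v (v + t *\<^sub>R w))"
      unfolding \<mu>_def using V v(1) wV by (intro min) (simp add: subspace_add subspace_scale)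
    moreover have "(norm (v + t *\<^sub>R w))^2 = 1 + t^2 * (w \<bullet> w)"
      unfolding power2_norm_eq_inner
      by (simp add: inner_add_left inner_add_right inner_commute vv vw power2_eq_square)
    moreover have "(v + t *\<^sub>R w) \<bullet> (M *v (v + t *\<^sub>R w))
        = \<mu> + 2*t*(w \<bullet> w) + t^2 * (w \<bullet> (M *v w))"
      using self_adjoint[of v w] wMv
      by (simp add: \<mu>_def algebra_simps inner_add_left inner_add_right inner_commute
          power2_eq_square matrix_vector_mult_scaleR)
    ultimately show "0 \<le> 0 + 2*t*(w \<bullet> w) + t^2 * (w \<bullet> (M *v w) - \<mu> * (w \<bullet> w))"
      by (simp add: algebra_simps)
  qed (use min[OF wV] in \<open>simp add: \<mu>_def power2_norm_eq_inner\<close>)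
  then have "w = 0" by simp
  then show ?thesis
    by (simp add: w_def \<mu>_def)
qed

lemma min_nonzero_eigenvalue_le:
  assumes "transpose M = M" "l \<in> eigenvalues M" "l \<noteq> 0"
  shows "min_nonzero_eigenvalue M \<le> l"
  unfolding min_nonzero_eigenvalue_def using finite_eigenvalues[OF assms(1)] assms(2,3)
  by (intro Min_le) auto

lemma min_nonzero_eigenvalue_mem:
  assumes "transpose M = M" "l \<in> eigenvalues M" "l \<noteq> 0"
  shows "min_nonzero_eigenvalue M \<in> eigenvalues M - {0}"
  unfolding min_nonzero_eigenvalue_def using finite_eigenvalues[OF assms(1)] assms(2,3)
  by (intro Min_in) auto

lemma range_Rayleigh_eigenvalue:
  fixes M :: "real^'n^'n"
  assumes M: "psd M" "M \<noteq> 0"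
  obtains \<mu> where "\<mu> \<in> eigenvalues M" "\<mu> \<noteq> 0"
    "\<And>u. u \<in> range (\<lambda>x. M *v x) \<Longrightarrow> \<mu> * (norm u)^2 \<le> u \<bullet> (M *v u)"
proof -
  define V where "V = range (\<lambda>x. M *v x)"
  have V: "subspace V" "\<And>x. x \<in> V \<Longrightarrow> M *v x \<in> V"
    unfolding V_def by (auto simp: subspace_range_matrix_vector_mult)
  obtain x where "M *v x \<noteq> 0"
    using M(2) by (metis matrix_eq matrix_vector_mult_0)
  then have "V \<noteq> {0}"
    unfolding V_def by blast
  obtain v where v: "v \<in> V" "norm v = 1"
    and min: "\<And>u. u \<in> V \<Longrightarrow> (v \<bullet> (M *v v)) * (norm u)^2 \<le> u \<bullet> (M *v u)"
    using Rayleigh_minimum_exists[OF V(1) \<open>V \<noteq> {0}\<close>, where M = M] by blast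
  define \<mu> where "\<mu> = v \<bullet> (M *v v)"
  have Mv: "M *v v = \<mu> *\<^sub>R v"
    unfolding \<mu>_def using Rayleigh_minimizer_eigenvector[OF psd_symmetric[OF M(1)] V v min] .
  have "v \<noteq> 0"
    using v(2) by auto
  show ?thesis
  proof (rule that)
    show "\<mu> \<in> eigenvalues M"
      unfolding eigenvalues_def using Mv \<open>v \<noteq> 0\<close> by blast
    show "\<mu> \<noteq> 0"
    proof
      assume "\<mu> = 0"
      obtain y where "v = M *v y"
        using v(1) unfolding V_def by blast
      then have "v \<bullet> v = y \<bullet> (M *v v)"
        using psd_self_adjoint[OF M(1), of y v] by (simp add: inner_commute)
      then show False
        using Mv \<open>\<mu> = 0\<close> \<open>v \<noteq> 0\<close> by simp
    qed
    show "\<mu> * (norm u)^2 \<le> u \<bullet> (M *v u)" if "u \<in> range (\<lambda>x. M *v x)" for u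
      using min that unfolding \<mu>_def V_def by blast
  qed
qed

lemma min_nonzero_eigenvalue_pos:
  assumes "psd M" "M \<noteq> 0"
  shows "0 < min_nonzero_eigenvalue M"
proof -
  obtain \<mu> where "\<mu> \<in> eigenvalues M" "\<mu> \<noteq> 0"
    using range_Rayleigh_eigenvalue[OF assms] by metis
  then have "min_nonzero_eigenvalue M \<in> eigenvalues M - {0}"
    using min_nonzero_eigenvalue_mem psd_symmetric[OF assms(1)] by blast
  then have "0 \<le> min_nonzero_eigenvalue M" "min_nonzero_eigenvalue M \<noteq> 0"
    using psd_eigenvalue_nonneg[OF assms(1)] by auto
  then show ?thesis
    by simp
qed

lemma min_nonzero_eigenvalue_le_norm:
  assumes "psd M" "M \<noteq> 0"
  shows "min_nonzero_eigenvalue M \<le> norm M"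
proof -
  obtain \<mu> where "\<mu> \<in> eigenvalues M" "\<mu> \<noteq> 0"
    using range_Rayleigh_eigenvalue[OF assms] by metis
  then have "min_nonzero_eigenvalue M \<in> eigenvalues M"
    using min_nonzero_eigenvalue_mem psd_symmetric[OF assms(1)] by blast
  then obtain u where u: "u \<noteq> 0" "M *v u = min_nonzero_eigenvalue M *\<^sub>R u"
    unfolding eigenvalues_def by blast
  have "min_nonzero_eigenvalue M * norm u = norm (M *v u)"
    using u(2) min_nonzero_eigenvalue_pos[OF assms] by simp
  also have "\<dots> \<le> norm M * norm u"
    by (rule norm_matrix_vector_mult_le)
  finally show ?thesis
    using u(1) by simp
qed

text \<open>The orthogonal complement of the range of a symmetric matrix is its kernel.\<close>
lemma psd_form_range_part:
  fixes M :: "real^'n^'n"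
  assumes M: "psd M"
  obtains y where "y \<in> range (\<lambda>x. M *v x)" "M *v y = M *v x" "y \<bullet> (M *v y) = x \<bullet> (M *v x)"
proof -
  define V where "V = range (\<lambda>x. M *v x)"
  have span_V: "span V = V"
    unfolding V_def by (simp add: span_eq_iff subspace_range_matrix_vector_mult)
  obtain y z where y: "y \<in> V" and z: "\<And>w. w \<in> V \<Longrightarrow> orthogonal z w" and x: "x = y + z"
    using orthogonal_subspace_decomp_exists[of V x] unfolding span_V by metis
  have "u \<bullet> (M *v z) = 0" for u
    using z[of "M *v u"] psd_self_adjoint[OF M, of u z] unfolding V_def
    by (simp add: orthogonal_def inner_commute)
  then have "M *v z = 0"
    by (metis inner_eq_zero_iff)
  then have Mx: "M *v x = M *v y"
    using x by (simp add: matrix_vector_right_distrib)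
  moreover have "z \<bullet> (M *v y) = 0"
    using z[of "M *v y"] unfolding V_def by (simp add: orthogonal_def)
  then have "x \<bullet> (M *v x) = y \<bullet> (M *v y)"
    using Mx x by (simp add: inner_add_left)
  ultimately show ?thesis
    using that y unfolding V_def by simp
qed

text \<open>On the range of M the Rayleigh quotient is at least the smallest nonzero
  eigenvalue.\<close>
lemma min_nonzero_eigenvalue_quadratic_bound:
  fixes M :: "real^'n^'n"
  assumes M: "psd M" "M \<noteq> 0"
  shows "min_nonzero_eigenvalue M * (x \<bullet> (M *v x)) \<le> (norm (M *v x))^2"
proof -
  define lam where "lam = min_nonzero_eigenvalue M"
  obtain \<mu> where \<mu>: "\<mu> \<in> eigenvalues M" "\<mu> \<noteq> 0"
    and Rayleigh: "\<And>u. u \<in> range (\<lambda>x. M *v x) \<Longrightarrow> \<mu> * (norm u)^2 \<le> u \<bullet> (M *v u)"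
    using range_Rayleigh_eigenvalue[OF M] by blast
  have lam: "0 < lam" "lam \<le> \<mu>"
    unfolding lam_def using min_nonzero_eigenvalue_pos[OF M]
      min_nonzero_eigenvalue_le[OF psd_symmetric[OF M(1)] \<mu>] by auto
  obtain y where y: "y \<in> range (\<lambda>x. M *v x)"
    and Mx: "M *v y = M *v x" and qx: "y \<bullet> (M *v y) = x \<bullet> (M *v x)"
    by (rule psd_form_range_part[OF M(1)])
  have q_le: "y \<bullet> (M *v y) \<le> norm y * norm (M *v y)"
    by (rule order_trans[OF abs_ge_self Cauchy_Schwarz_ineq2])
  have \<mu>_norm: "\<mu> * norm y \<le> norm (M *v y)"
  proof (cases "y = 0")
    case False
    have "(\<mu> * norm y) * norm y = \<mu> * (norm y)^2"
      by (simp add: power2_eq_square)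
    also have "\<dots> \<le> norm (M *v y) * norm y"
      using Rayleigh[OF y] q_le by (simp add: mult.commute)
    finally show ?thesis
      using False by (meson mult_le_cancel_right_pos zero_less_norm_iff)
  qed simp
  have "lam * (y \<bullet> (M *v y)) \<le> \<mu> * (y \<bullet> (M *v y))"
    using lam psd_nonneg[OF M(1)] by (simp add: mult_right_mono)
  also have "\<dots> \<le> (\<mu> * norm y) * norm (M *v y)"
    using q_le lam by (simp add: mult.assoc)
  also have "\<dots> \<le> (norm (M *v y))^2"
    using \<mu>_norm by (simp add: power2_eq_square mult_right_mono)
  finally show ?thesis
    using qx Mx by (simp add: lam_def)
qed

section \<open>The Moore--Penrose pseudoinverse\<close>

definition orthogonal_projection_onto ::
    "'a::euclidean_space set \<Rightarrow> ('a \<Rightarrow> 'a) \<Rightarrow> bool" where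
  "orthogonal_projection_onto S p \<longleftrightarrow>
     linear p \<and> (\<forall>x. p x \<in> S) \<and> (\<forall>x. \<forall>w\<in>S. (x - p x) \<bullet> w = 0)"

lemma orthogonal_projection_onto_exists:
  fixes S :: "'a::euclidean_space set"
  assumes "subspace S"
  shows "\<exists>p. orthogonal_projection_onto S p"
proof -
  obtain T where T: "T \<subseteq> S" "pairwise orthogonal T" "span T = S"
    using orthogonal_basis_subspace[OF assms] by metis
  define p where "p x = (\<Sum>b\<in>T. (b \<bullet> x / (b \<bullet> b)) *\<^sub>R b)" for x
  have "linear p"
    unfolding p_def
    by (rule linearI) (simp_all add: inner_add_right add_divide_distrib scaleR_add_left
        sum.distrib scaleR_sum_right)
  moreover have "p x \<in> S" for x
    unfolding p_def using T(1) assms by (auto intro: subspace_sum subspace_scale)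
  moreover have "(x - p x) \<bullet> w = 0" if "w \<in> S" for x w
    using Gram_Schmidt_step[OF T(2), of w x] that T(3)
    by (simp add: p_def orthogonal_def inner_commute)
  ultimately show ?thesis
    unfolding orthogonal_projection_onto_def by blast
qed

lemma orthogonal_projection_onto_fixes:
  assumes "subspace S" "orthogonal_projection_onto S p" "s \<in> S"
  shows "p s = s"
proof -
  have "s - p s \<in> S"
    using assms by (simp add: subspace_diff orthogonal_projection_onto_def)
  then have "(s - p s) \<bullet> (s - p s) = 0"
    using assms(2) by (simp add: orthogonal_projection_onto_def)
  then show ?thesis by simp
qed

lemma orthogonal_projection_onto_self_adjoint:
  assumes "orthogonal_projection_onto S p"
  shows "x \<bullet> p y = p x \<bullet> y"
proof -
  have "(x - p x) \<bullet> p y = 0" "(y - p y) \<bullet> p x = 0"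
    using assms by (simp_all add: orthogonal_projection_onto_def)
  then have "x \<bullet> p y = p x \<bullet> p y" "y \<bullet> p x = p y \<bullet> p x"
    by (simp_all add: inner_diff_left)
  then show ?thesis
    by (simp add: inner_commute)
qed

lemma pinv_unique:
  assumes "is_pinv A Z1" and "is_pinv A Z2"
  shows "Z1 = Z2"
proof -
  have a1: "A ** Z1 ** A = A" "Z1 ** A ** Z1 = Z1"
      "transpose (A ** Z1) = A ** Z1" "transpose (Z1 ** A) = Z1 ** A"
    using assms(1) by (auto simp: is_pinv_def)
  have a2: "A ** Z2 ** A = A" "Z2 ** A ** Z2 = Z2"
      "transpose (A ** Z2) = A ** Z2" "transpose (Z2 ** A) = Z2 ** A"
    using assms(2) by (auto simp: is_pinv_def)
  have AZ: "A ** Z1 = A ** Z2"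
  proof -
    have "A ** Z1 = (A ** Z2 ** A) ** Z1" using a2 by simp
    also have "\<dots> = (A ** Z2) ** (A ** Z1)" by (simp add: matrix_mul_assoc)
    also have "\<dots> = transpose (A ** Z2) ** transpose (A ** Z1)" using a1 a2 by simp
    also have "\<dots> = transpose (A ** Z1 ** A ** Z2)"
      by (simp add: matrix_transpose_mul matrix_mul_assoc)
    also have "\<dots> = transpose (A ** Z2)" using a1 by simp
    also have "\<dots> = A ** Z2" using a2 by simp
    finally show ?thesis .
  qed
  have ZA: "Z1 ** A = Z2 ** A"
  proof -
    have "Z1 ** A = Z1 ** (A ** Z2 ** A)" using a2 by simp
    also have "\<dots> = (Z1 ** A) ** (Z2 ** A)" by (simp add: matrix_mul_assoc)
    also have "\<dots> = transpose (Z1 ** A) ** transpose (Z2 ** A)" using a1 a2 by simp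
    also have "\<dots> = transpose (Z2 ** A ** Z1 ** A)"
      by (simp add: matrix_transpose_mul matrix_mul_assoc)
    also have "\<dots> = transpose (Z2 ** (A ** Z1 ** A))" by (simp add: matrix_mul_assoc)
    also have "\<dots> = transpose (Z2 ** A)" using a1 by simp
    also have "\<dots> = Z2 ** A" using a2 by simp
    finally show ?thesis .
  qed
  have "Z1 = Z1 ** A ** Z1" using a1 by simp
  also have "\<dots> = Z1 ** (A ** Z2)" by (simp add: AZ flip: matrix_mul_assoc)
  also have "\<dots> = Z2 ** A ** Z2" by (simp add: ZA matrix_mul_assoc)
  also have "\<dots> = Z2" using a2 by simp
  finally show ?thesis .
qed

lemma matrix_vector_mult_row_space_projection:
  assumes "orthogonal_projection_onto (range (\<lambda>y. transpose X *v y)) p"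
  shows "(X::real^'c^'r) *v p x = X *v x"
proof -
  have "y \<bullet> (X *v (x - p x)) = 0" for y
    using assms unfolding orthogonal_projection_onto_def
    by (metis inner_commute inner_matrix_vector_transpose rangeI)
  then have "X *v (x - p x) = 0"
    by (metis inner_eq_zero_iff)
  then show ?thesis
    by (simp add: matrix_vector_mult_diff_distrib)
qed

lemma inj_on_row_space: "inj_on (\<lambda>x. (X::real^'c^'r) *v x) (range (\<lambda>y. transpose X *v y))"
proof (rule inj_onI)
  fix r1 r2
  assume "r1 \<in> range (\<lambda>y. transpose X *v y)" "r2 \<in> range (\<lambda>y. transpose X *v y)"
    and eq: "X *v r1 = X *v r2"
  then obtain y where "r1 - r2 = transpose X *v y"
    by (metis (no_types, lifting) imageE matrix_vector_mult_diff_distrib)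
  then have "(r1 - r2) \<bullet> (r1 - r2) = y \<bullet> (X *v (r1 - r2))"
    by (simp add: inner_matrix_vector_transpose)
  also have "\<dots> = 0"
    using eq by (simp add: matrix_vector_mult_diff_distrib)
  finally show "r1 = r2" by simp
qed

lemma is_pinv_if_projections:
  fixes X :: "real^'c^'r" and Z :: "real^'r^'c"
  defines "R \<equiv> range (\<lambda>y. transpose X *v y)"
  assumes pR: "orthogonal_projection_onto R pR"
    and pS: "orthogonal_projection_onto (range (\<lambda>x. X *v x)) pS"
    and ZX: "\<And>x. Z *v (X *v x) = pR x" and XZ: "\<And>y. X *v (Z *v y) = pS y"
    and Z_range: "\<And>y. Z *v y \<in> R"
  shows "is_pinv X Z"
proof -
  have pR_fixes: "pR (Z *v y) = Z *v y" for y
    using orthogonal_projection_onto_fixes[OF _ pR Z_range]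
    unfolding R_def by (metis subspace_range_matrix_vector_mult)
  have XpR: "X *v pR x = X *v x" for x
    using matrix_vector_mult_row_space_projection pR unfolding R_def by blast
  have "X ** Z ** X = X"
    by (simp add: matrix_eq ZX XpR flip: matrix_vector_mul_assoc)
  moreover have "Z ** X ** Z = Z"
    by (simp add: matrix_eq ZX pR_fixes flip: matrix_vector_mul_assoc)
  moreover have "transpose (X ** Z) = X ** Z"
    using orthogonal_projection_onto_self_adjoint[OF pS]
    by (intro symmetric_if_self_adjoint) (simp only: XZ flip: matrix_vector_mul_assoc)
  moreover have "transpose (Z ** X) = Z ** X"
    using orthogonal_projection_onto_self_adjoint[OF pR]
    by (intro symmetric_if_self_adjoint) (simp only: ZX flip: matrix_vector_mul_assoc)
  ultimately show ?thesis
    unfolding is_pinv_def by blast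
qed

text \<open>Z is a linear left inverse of X on the row space, precomposed with the
  orthogonal projection onto the column space.\<close>
lemma pinv_exists: "\<exists>Z. is_pinv (X::real^'c^'r) Z"
proof -
  define R where "R = range (\<lambda>y. transpose X *v y)"
  define S where "S = range (\<lambda>x. X *v x)"
  have span_R: "span R = R"
    using subspace_range_matrix_vector_mult[of "transpose X"] unfolding R_def
    by (simp only: span_eq_iff)
  obtain pR where pR: "orthogonal_projection_onto R pR"
    using orthogonal_projection_onto_exists subspace_range_matrix_vector_mult R_def by blast
  obtain pS where pS: "orthogonal_projection_onto S pS"
    using orthogonal_projection_onto_exists subspace_range_matrix_vector_mult S_def by blast
  have "inj_on (\<lambda>x. X *v x) (span R)"
    unfolding span_R unfolding R_def by (rule inj_on_row_space)
  then obtain g where "range g \<subseteq> span R" "linear g" "\<forall>x\<in>span R. g (X *v x) = x"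
    using real_vector.linear_inj_on_left_inverse[OF matrix_vector_mul_linear] by blast
  then have g: "range g \<subseteq> R" "linear g" "\<And>x. x \<in> R \<Longrightarrow> g (X *v x) = x"
    unfolding span_R by auto
  define Z where "Z = matrix (g \<circ> pS)"
  have linear_pS: "linear pS"
    using pS by (simp add: orthogonal_projection_onto_def)
  have Z_mult: "Z *v y = g (pS y)" for y
    unfolding Z_def using matrix_vector_mul(2)[OF linear_compose[OF linear_pS g(2)]] by simp
  have XpR: "X *v pR x = X *v x" for x
    using matrix_vector_mult_row_space_projection pR unfolding R_def by blast
  have pR_R: "pR x \<in> R" for x
    using pR by (simp add: orthogonal_projection_onto_def)
  have pS_fixes: "pS (X *v x) = X *v x" for x
    using orthogonal_projection_onto_fixes[OF _ pS] subspace_range_matrix_vector_mult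
    unfolding S_def by blast
  have ZX: "Z *v (X *v x) = pR x" for x
    by (metis Z_mult XpR g(3) pR_R pS_fixes)
  have XZ: "X *v (Z *v y) = pS y" for y
  proof -
    obtain x where "pS y = X *v x"
      using pS unfolding orthogonal_projection_onto_def S_def by blast
    then show ?thesis
      by (metis ZX XpR Z_mult pS_fixes)
  qed
  have "Z *v y \<in> R" for y
    using g(1) Z_mult by auto
  then have "is_pinv X Z"
    using is_pinv_if_projections[of X pR pS Z] pR pS ZX XZ unfolding R_def S_def by blast
  then show ?thesis ..
qed

lemma is_pinv_pinv: "is_pinv X (pinv X)"
  unfolding pinv_def by (rule theI') (metis pinv_exists pinv_unique)

definition orthogonal_projection_matrix :: "real^'n^'n \<Rightarrow> bool" where
  "orthogonal_projection_matrix P \<longleftrightarrow> transpose P = P \<and> P ** P = P"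

lemma orthogonal_projection_matrix_complement:
  assumes "orthogonal_projection_matrix P"
  shows "orthogonal_projection_matrix (mat 1 - P)"
    and "P ** (mat 1 - P) = 0" "(mat 1 - P) ** P = 0"
  using assms
  by (simp_all add: orthogonal_projection_matrix_def transpose_diff matrix_mul_diff_ldistrib
      matrix_mul_diff_rdistrib)

lemma orthogonal_projection_matrix_pinv:
  "orthogonal_projection_matrix (X ** pinv X)" "X ** pinv X ** X = X"
  using is_pinv_pinv[of X]
  by (simp_all add: orthogonal_projection_matrix_def is_pinv_def) (metis matrix_mul_assoc)

lemma pinv_complement:
  "(mat 1 - X ** pinv X) ** X = 0" "transpose (mat 1 - X ** pinv X) = mat 1 - X ** pinv X"
  using orthogonal_projection_matrix_pinv(2)[of X]
    orthogonal_projection_matrix_complement(1)[OF orthogonal_projection_matrix_pinv(1)[of X]]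
  by (simp_all add: matrix_mul_diff_rdistrib orthogonal_projection_matrix_def)

section \<open>Blocks with respect to an orthogonal projection\<close>

lemma norm_blocks:
  fixes A P :: "real^'n^'n"
  assumes P: "orthogonal_projection_matrix P"
  defines "Q \<equiv> mat 1 - P"
  shows "(norm A)^2 = (norm (A - Q ** A ** Q))^2 + (norm (Q ** A ** Q))^2"
    and "(norm (A - Q ** A ** Q))^2
           = (norm (P ** A ** P))^2 + (norm (P ** A ** Q))^2 + (norm (Q ** A ** P))^2"
proof -
  note PQ = orthogonal_projection_matrix_complement[OF P, folded Q_def]
  have sym: "transpose P = P" "transpose Q = Q"
    using P PQ(1) by (simp_all add: orthogonal_projection_matrix_def)
  have block_sum: "A - Q ** A ** Q = P ** A ** P + P ** A ** Q + Q ** A ** P"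
    by (simp add: Q_def matrix_mul_diff_ldistrib matrix_mul_diff_rdistrib matrix_mul_assoc)
  have orth: "orthogonal (U ** A ** V) (U' ** A ** V')"
    if "transpose U ** U' = 0 \<or> V' ** transpose V = 0" for U V U' V' :: "real^'n^'n"
    using inner_sandwich_eq_0[OF that] by (simp add: orthogonal_def)
  have "orthogonal (P ** A ** P) (Q ** A ** Q)" "orthogonal (P ** A ** Q) (Q ** A ** Q)"
    "orthogonal (Q ** A ** P) (Q ** A ** Q)" "orthogonal (P ** A ** P) (Q ** A ** P)"
    "orthogonal (P ** A ** Q) (Q ** A ** P)" "orthogonal (P ** A ** P) (P ** A ** Q)"
    by (rule orth; simp add: sym PQ(2,3))+
  then have orth_QAQ: "orthogonal (A - Q ** A ** Q) (Q ** A ** Q)"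
    and orth_rest: "orthogonal (P ** A ** P + P ** A ** Q) (Q ** A ** P)"
      "orthogonal (P ** A ** P) (P ** A ** Q)"
    unfolding block_sum orthogonal_def by (simp_all add: inner_add_left)
  show "(norm A)^2 = (norm (A - Q ** A ** Q))^2 + (norm (Q ** A ** Q))^2"
    using norm_add_Pythagorean[OF orth_QAQ] by simp
  show "(norm (A - Q ** A ** Q))^2
      = (norm (P ** A ** P))^2 + (norm (P ** A ** Q))^2 + (norm (Q ** A ** P))^2"
    unfolding block_sum
    using norm_add_Pythagorean[OF orth_rest(1)] norm_add_Pythagorean[OF orth_rest(2)] by simp
qed

lemma norm_off_diagonal_block_bound:
  fixes A P :: "real^'n^'n"
  assumes P: "orthogonal_projection_matrix P" and A: "transpose A = A"
  defines "Q \<equiv> mat 1 - P"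
  shows "2 * (norm (P ** A ** Q))^2 \<le> (norm (A - Q ** A ** Q))^2"
proof -
  have "transpose P = P" "transpose Q = Q"
    using P orthogonal_projection_matrix_complement(1)[OF P]
    by (simp_all add: Q_def orthogonal_projection_matrix_def)
  then have "transpose (P ** A ** Q) = Q ** A ** P"
    by (simp add: matrix_transpose_mul A matrix_mul_assoc)
  then have "norm (Q ** A ** P) = norm (P ** A ** Q)"
    using norm_transpose[of "P ** A ** Q"] by simp
  then show ?thesis
    using norm_blocks(2)[OF P, of A] unfolding Q_def by simp
qed

lemma compression_square_decomposition:
  fixes M P :: "real^'n^'n"
  assumes P: "orthogonal_projection_matrix P" and M: "transpose M = M"
  defines "Q \<equiv> mat 1 - P"
  shows "Q ** M ** M ** Q
           = transpose (P ** M ** Q) ** (P ** M ** Q) + (Q ** M ** Q) ** (Q ** M ** Q)"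
proof -
  have sym: "transpose P = P" "transpose Q = Q"
    using P orthogonal_projection_matrix_complement(1)[OF P]
    by (simp_all add: Q_def orthogonal_projection_matrix_def)
  have idem: "A ** P ** P = A ** P" "A ** Q ** Q = A ** Q" for A :: "real^'n^'n"
    using P orthogonal_projection_matrix_complement(1)[OF P]
    by (simp_all add: Q_def orthogonal_projection_matrix_def flip: matrix_mul_assoc)
  have "transpose (P ** M ** Q) ** (P ** M ** Q) + (Q ** M ** Q) ** (Q ** M ** Q)
      = Q ** M ** (P + Q) ** M ** Q"
    by (simp add: matrix_transpose_mul sym M matrix_mul_assoc idem
        matrix_add_ldistrib matrix_mul_add_rdistrib)
  then show ?thesis
    by (simp add: Q_def)
qed

lemma compression_square_Loewner_lower_bound:
  fixes M Q :: "real^'n^'n"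
  assumes M: "transpose M = M" and Q: "transpose Q = Q"
    and lam: "\<And>x. lam * (x \<bullet> (M *v x)) \<le> (norm (M *v x))^2"
  shows "0 \<le> x \<bullet> ((Q ** M ** M ** Q - lam *\<^sub>R (Q ** M ** Q)) *v x)"
proof -
  have "x \<bullet> ((Q ** M ** M ** Q) *v x) = (Q *v x) \<bullet> (M *v (M *v (Q *v x)))"
    by (simp only: matrix_vector_mul_assoc[symmetric] inner_matrix_vector_transpose[of x Q] Q)
  also have "\<dots> = (norm (M *v (Q *v x)))^2"
    by (simp only: power2_norm_eq_inner inner_matrix_vector_transpose[of "Q *v x" M] M)
  finally have "x \<bullet> ((Q ** M ** M ** Q) *v x) = (norm (M *v (Q *v x)))^2" .
  moreover have "x \<bullet> ((Q ** M ** Q) *v x) = (Q *v x) \<bullet> (M *v (Q *v x))"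
    by (simp only: matrix_vector_mul_assoc[symmetric] inner_matrix_vector_transpose[of x Q] Q)
  moreover have "x \<bullet> ((Q ** M ** M ** Q - lam *\<^sub>R (Q ** M ** Q)) *v x)
      = x \<bullet> ((Q ** M ** M ** Q) *v x) - lam * (x \<bullet> ((Q ** M ** Q) *v x))"
    by (simp add: matrix_vector_mult_diff_rdistrib inner_diff_right
        flip: scaleR_matrix_vector_assoc)
  ultimately show ?thesis
    using lam[of "Q *v x"] by simp
qed

lemma compression_norm_bound:
  fixes M P :: "real^'n^'n"
  assumes M: "psd M" and lam: "\<And>x. lam * (x \<bullet> (M *v x)) \<le> (norm (M *v x))^2"
    and P: "orthogonal_projection_matrix P"
  defines "Q \<equiv> mat 1 - P"
  shows "lam * (norm (Q ** M ** Q))^2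
           \<le> norm (Q ** M ** Q) * (norm (P ** M ** Q))^2 + (norm (Q ** M ** Q))^3"
proof -
  define C where "C = Q ** M ** Q"
  define B where "B = P ** M ** Q"
  have sym: "transpose M = M" "transpose Q = Q"
    using psd_symmetric[OF M] orthogonal_projection_matrix_complement(1)[OF P]
    by (simp_all add: Q_def orthogonal_projection_matrix_def)
  have "psd C"
    using psd_congruence[OF M, of Q] by (simp add: C_def sym)
  then have "0 \<le> inner C (Q ** M ** M ** Q - lam *\<^sub>R C)"
    using compression_square_Loewner_lower_bound[OF sym lam] unfolding C_def
    by (rule inner_psd_nonneg)
  then have "lam * (norm C)^2 \<le> inner C (transpose B ** B) + inner C (C ** C)"
    using compression_square_decomposition[OF P sym(1)]
    by (simp add: inner_diff_right inner_add_right dot_square_norm B_def C_def Q_def)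
  also have "\<dots> \<le> norm C * (norm B)^2 + (norm C)^3"
    using inner_matrix_mul_le[of C "transpose B" B] inner_matrix_mul_le[of C C C]
    by (simp add: norm_transpose power2_eq_square power3_eq_cube)
  finally show ?thesis
    by (simp only: C_def B_def)
qed

section \<open>The incidence angle\<close>

lemma compression_tangent_eq_0:
  fixes Q :: "real^'n^'n" and X Y :: "real^'r^'n"
  assumes "Q ** X = 0" "transpose Q = Q"
  shows "Q ** (X ** transpose Y + Y ** transpose X) ** Q = 0"
proof -
  have "Q ** (X ** transpose Y) ** Q = 0"
    by (simp add: matrix_mul_assoc assms(1))
  moreover have "Q ** (Y ** transpose X) ** Q = Q ** Y ** (transpose X ** Q)"
    by (simp add: matrix_mul_assoc)
  ultimately show ?thesis
    by (simp add: matrix_add_ldistrib matrix_mul_add_rdistrib transpose_mult_eq_0[OF assms])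
qed

lemma tangent_witness:
  fixes X :: "real^'r^'n" and E :: "real^'n^'n"
  assumes Z: "is_pinv X Z" and E: "transpose E = E"
  defines "P \<equiv> X ** Z"
  defines "Y \<equiv> transpose (Z ** (P ** E - (1/2) *\<^sub>R (P ** E ** P)))"
  shows "X ** transpose Y + Y ** transpose X = E - (mat 1 - P) ** E ** (mat 1 - P)"
proof -
  have P: "transpose P = P" "P ** P = P"
    using Z unfolding P_def is_pinv_def by (auto simp: matrix_mul_assoc)
  define W where "W = P ** E ** P"
  define A where "A = P ** E - (1/2) *\<^sub>R W"
  have XY: "X ** transpose Y = A"
  proof -
    have "P ** A = A"
      by (simp add: A_def W_def matrix_mul_diff_ldistrib matrix_scalar_ac matrix_mul_assoc P(2)
          flip: scalar_matrix_assoc)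
    then show ?thesis
      by (simp add: Y_def A_def W_def P_def matrix_mul_assoc)
  qed
  have "Y ** transpose X = transpose (X ** transpose Y)"
    by (simp add: matrix_transpose_mul)
  also have "\<dots> = E ** P - (1/2) *\<^sub>R W"
    by (simp add: XY A_def W_def transpose_diff transpose_scalar matrix_transpose_mul E P(1)
        matrix_mul_assoc)
  finally have "X ** transpose Y + Y ** transpose X
      = (P ** E - (1/2) *\<^sub>R W) + (E ** P - (1/2) *\<^sub>R W)"
    by (simp add: XY A_def)
  also have "\<dots> = P ** E + E ** P - ((1/2) *\<^sub>R W + (1/2) *\<^sub>R W)"
    by (simp only: add_diff_eq diff_add_eq diff_diff_eq)
  also have "\<dots> = P ** E + E ** P - W"
    by (simp flip: scaleR_add_left)
  also have "\<dots> = E - (mat 1 - P) ** E ** (mat 1 - P)"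
    by (simp add: W_def matrix_mul_diff_ldistrib matrix_mul_diff_rdistrib matrix_mul_assoc)
  finally show ?thesis .
qed

lemma residual_times_compression:
  fixes Q M :: "real^'n^'n" and U :: "real^'n^'m" and X :: "real^'r^'n"
  assumes "Q ** X = 0" "transpose Q = Q"
  shows "U ** (X ** transpose X - M) ** Q = - (U ** M ** Q)"
proof -
  have "U ** (X ** transpose X) ** Q = U ** X ** (transpose X ** Q)"
    by (simp add: matrix_mul_assoc)
  then have "U ** (X ** transpose X) ** Q = 0"
    by (simp add: transpose_mult_eq_0[OF assms])
  then show ?thesis
    by (simp add: matrix_mul_diff_ldistrib matrix_mul_diff_rdistrib)
qed

lemma Sup_normalized_inner_eq:
  fixes E S :: "'a::real_inner"
  assumes "S \<in> T" and orth: "\<And>V. V \<in> T \<Longrightarrow> inner (E - S) V = 0"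
    and "T - {0} \<noteq> {}" and "E \<noteq> 0"
  shows "Sup ((\<lambda>V. inner E V / (norm E * norm V)) ` (T - {0})) = norm S / norm E"
proof (rule cSup_eq_maximum)
  have inner_E: "inner E V = inner S V" if "V \<in> T" for V
    using orth[OF that] by (simp add: inner_diff_left)
  show "norm S / norm E \<in> (\<lambda>V. inner E V / (norm E * norm V)) ` (T - {0})"
  proof (cases "S = 0")
    case True
    then obtain V where "V \<in> T - {0}"
      using assms(3) by blast
    then show ?thesis
      using True inner_E by (intro image_eqI[of _ _ V]) auto
  next
    case False
    then show ?thesis
      using \<open>S \<in> T\<close> inner_E[OF \<open>S \<in> T\<close>]
      by (intro image_eqI[of _ _ S]) (auto simp: dot_square_norm power2_eq_square)
  qed
  fix x
  assume "x \<in> (\<lambda>V. inner E V / (norm E * norm V)) ` (T - {0})"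
  then obtain V where V: "V \<in> T" "V \<noteq> 0" and x: "x = inner E V / (norm E * norm V)"
    by blast
  have "inner E V \<le> norm S * norm V"
    unfolding inner_E[OF V(1)] by (rule norm_cauchy_schwarz)
  then have "x \<le> norm S * norm V / (norm E * norm V)"
    unfolding x using assms(4) by (intro divide_right_mono) auto
  then show "x \<le> norm S / norm E"
    using V(2) by simp
qed

lemma Sup_tangent_cosine:
  fixes M :: "real^'n^'n" and X :: "real^'r^'n"
  assumes M: "transpose M = M" and X: "X \<noteq> 0" and E: "X ** transpose X - M \<noteq> 0"
  defines "E \<equiv> X ** transpose X - M" and "Q \<equiv> mat 1 - X ** pinv X"
  shows "Sup ((\<lambda>Y. inner E (X ** transpose Y + Y ** transpose X)
                  / (norm E * norm (X ** transpose Y + Y ** transpose X)))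
              ` {Y. X ** transpose Y + Y ** transpose X \<noteq> 0})
         = norm (E - Q ** E ** Q) / norm E"
proof -
  define T where "T = range (\<lambda>Y. X ** transpose Y + Y ** transpose X)"
  have sym_E: "transpose E = E"
    by (simp add: E_def transpose_diff M matrix_transpose_mul)
  note Q = pinv_complement[of X, folded Q_def]
  have witness: "E - Q ** E ** Q \<in> T"
    unfolding T_def Q_def
    by (rule range_eqI) (rule tangent_witness[OF is_pinv_pinv sym_E, symmetric])
  have orth: "inner (E - (E - Q ** E ** Q)) V = 0" if "V \<in> T" for V
  proof -
    obtain Y where V: "V = X ** transpose Y + Y ** transpose X"
      using \<open>V \<in> T\<close> unfolding T_def by blast
    have "inner (E - (E - Q ** E ** Q)) V = inner E (transpose Q ** V ** transpose Q)"
      by (simp add: inner_matrix_sandwich)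
    also have "\<dots> = 0"
      using compression_tangent_eq_0[OF Q, of Y] by (simp add: V Q(2))
    finally show ?thesis .
  qed
  have "X ** transpose X \<noteq> 0"
    using X matrix_mul_transpose_self_eq_0 by blast
  then have "X ** transpose X + X ** transpose X \<noteq> 0"
    by (simp flip: scaleR_2)
  then have "X ** transpose X + X ** transpose X \<in> T - {0}"
    unfolding T_def by blast
  then have "Sup ((\<lambda>V. inner E V / (norm E * norm V)) ` (T - {0}))
      = norm (E - Q ** E ** Q) / norm E"
    using Sup_normalized_inner_eq[OF witness orth] E unfolding E_def by blast
  moreover have "(\<lambda>Y. inner E (X ** transpose Y + Y ** transpose X)
                    / (norm E * norm (X ** transpose Y + Y ** transpose X)))
                  ` {Y. X ** transpose Y + Y ** transpose X \<noteq> 0}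
      = (\<lambda>V. inner E V / (norm E * norm V)) ` (T - {0})"
    unfolding T_def by auto
  ultimately show ?thesis
    by simp
qed

lemma sin_eq_if_cos_eq:
  fixes \<theta> a c d :: real
  assumes "0 \<le> \<theta>" "\<theta> \<le> pi / 2" "cos \<theta> = a / d" "a^2 + c^2 = d^2" "0 \<le> c" "0 < d"
  shows "sin \<theta> = c / d"
proof -
  have "(sin \<theta>)^2 = 1 - (a / d)^2"
    using sin_cos_squared_add[of \<theta>] assms(3) by simp
  also have "\<dots> = (c / d)^2"
    using assms(4,6) by (simp add: field_simps)
  finally have "(sin \<theta>)^2 = (c / d)^2" .
  moreover have "0 \<le> sin \<theta>"
    using assms(1,2) by (intro sin_ge_zero) auto
  ultimately show ?thesis
    using assms(5,6) by (simp add: power2_eq_iff_nonneg)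
qed

lemma incidence_angle_sin_eq:
  fixes M :: "real^'n^'n" and X :: "real^'r^'n" and \<theta> :: real
  assumes M: "transpose M = M" and X: "X \<noteq> 0" and E: "X ** transpose X - M \<noteq> 0"
    and \<theta>: "0 \<le> \<theta>" "\<theta> \<le> pi / 2"
    and cos: "cos \<theta> = Sup ((\<lambda>Y. inner (X ** transpose X - M) (X ** transpose Y + Y ** transpose X)
                  / (norm (X ** transpose X - M) * norm (X ** transpose Y + Y ** transpose X)))
              ` {Y. X ** transpose Y + Y ** transpose X \<noteq> 0})"
  shows "sin \<theta> = norm ((mat 1 - X ** pinv X) ** M ** (mat 1 - X ** pinv X))
                  / norm (X ** transpose X - M)"
proof -
  define E where "E = X ** transpose X - M"
  define Q where "Q = mat 1 - X ** pinv X"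
  note Q = pinv_complement[of X, folded Q_def]
  have cos_eq: "cos \<theta> = norm (E - Q ** E ** Q) / norm E"
    using cos Sup_tangent_cosine[OF M X E] unfolding E_def Q_def by simp
  have "(norm E)^2 = (norm (E - Q ** E ** Q))^2 + (norm (Q ** E ** Q))^2"
    unfolding Q_def by (rule norm_blocks(1)[OF orthogonal_projection_matrix_pinv(1)])
  moreover have "Q ** E ** Q = - (Q ** M ** Q)"
    unfolding E_def by (rule residual_times_compression[OF Q])
  ultimately have pythagoras: "(norm (E - Q ** E ** Q))^2 + (norm (Q ** M ** Q))^2 = (norm E)^2"
    by simp
  have "0 < norm E"
    using E by (simp add: E_def)
  then have "sin \<theta> = norm (Q ** M ** Q) / norm E"
    by (intro sin_eq_if_cos_eq[OF \<theta> cos_eq pythagoras]) simp_all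
  then show ?thesis
    unfolding E_def Q_def .
qed

lemma residual_block_bound:
  fixes M :: "real^'n^'n" and X :: "real^'r^'n"
  assumes M: "transpose M = M"
  defines "P \<equiv> X ** pinv X" and "Q \<equiv> mat 1 - X ** pinv X"
  shows "2 * (norm (P ** M ** Q))^2 + (norm (Q ** M ** Q))^2 \<le> (norm (X ** transpose X - M))^2"
proof -
  define E where "E = X ** transpose X - M"
  note P = orthogonal_projection_matrix_pinv(1)[of X]
  have E_Q: "U ** E ** Q = - (U ** M ** Q)" for U :: "real^'n^'n"
    unfolding E_def Q_def by (rule residual_times_compression[OF pinv_complement])
  have "transpose E = E"
    by (simp add: E_def transpose_diff M matrix_transpose_mul)
  then have "2 * (norm (P ** E ** Q))^2 \<le> (norm (E - Q ** E ** Q))^2"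
    unfolding Q_def P_def by (rule norm_off_diagonal_block_bound[OF P])
  moreover have "(norm E)^2 = (norm (E - Q ** E ** Q))^2 + (norm (Q ** E ** Q))^2"
    unfolding Q_def by (rule norm_blocks(1)[OF P])
  ultimately show ?thesis
    unfolding E_def[symmetric] by (simp add: E_Q)
qed

section \<open>The sine bound\<close>

lemma quadratic_small_root_bound:
  fixes \<rho> t :: real
  assumes \<rho>: "0 < \<rho>" "\<rho> < 1" and t: "0 \<le> t" "t \<le> 1" and quad: "2 * t \<le> \<rho> * (1 + t^2)"
  shows "t \<le> \<rho> / (1 + sqrt (1 - \<rho>^2))"
proof -
  define s where "s = sqrt (1 - \<rho>^2)"
  define u where "u = \<rho> / (1 + s)"
  have s: "0 \<le> s" "s^2 = 1 - \<rho>^2"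
    using \<rho> by (simp_all add: s_def abs_square_less_1 less_imp_le)
  have u: "0 \<le> u" "u \<le> \<rho>"
    using \<rho> s(1) by (simp_all add: u_def divide_le_eq)
  have u_root: "2 * u = \<rho> * (1 + u^2)"
  proof -
    have "\<rho> * (1 + u^2) = \<rho> * ((1 + s)^2 + \<rho>^2) / (1 + s)^2"
      using s(1) by (simp add: u_def field_simps)
    also have "(1 + s)^2 + \<rho>^2 = 2 * (1 + s)"
      using s(2) by (simp add: power2_eq_square algebra_simps)
    also have "\<rho> * (2 * (1 + s)) / (1 + s)^2 = (2 * \<rho>) * (1 + s) / ((1 + s) * (1 + s))"
      by (simp add: power2_eq_square mult_ac)
    also have "\<dots> = 2 * u"
      using s(1) by (simp add: u_def)
    finally show ?thesis ..
  qed
  have "\<rho> * (t + u) \<le> t + u"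
    by (rule mult_left_le_one_le) (use \<rho> t u in auto)
  then have "0 < 2 - \<rho> * (t + u)"
    using \<rho> t u by linarith
  moreover have "(t - u) * (2 - \<rho> * (t + u)) \<le> 0"
  proof -
    have "(t - u) * (2 - \<rho> * (t + u))
        = (2 * t - \<rho> * (1 + t^2)) - (2 * u - \<rho> * (1 + u^2))"
      by (simp add: algebra_simps power2_eq_square)
    then show ?thesis
      using quad u_root by linarith
  qed
  ultimately have "t \<le> u"
    by (simp add: mult_le_0_iff)
  then show ?thesis
    by (simp add: u_def s_def)
qed

lemma incidence_quadratic_inequality:
  fixes b c d lam \<rho> :: real
  assumes d: "0 < d" "d \<le> \<rho> * lam" and c: "0 \<le> c" and "0 < \<rho>"
    and blocks: "2 * b^2 + c^2 \<le> d^2" and compression: "lam * c^2 \<le> c * b^2 + c^3"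
  shows "2 * (c / d) \<le> \<rho> * (1 + (c / d)^2)"
proof -
  have "2 * d * c \<le> \<rho> * (d^2 + c^2)"
  proof (cases "c = 0")
    case False
    have "c * (lam * c) = lam * c^2" "c * (b^2 + c^2) = c * b^2 + c^3"
      by (simp_all add: power2_eq_square power3_eq_cube algebra_simps)
    then have "c * (lam * c) \<le> c * (b^2 + c^2)"
      using compression by linarith
    then have "lam * c \<le> b^2 + c^2"
      by (rule mult_left_le_imp_le) (use c False in auto)
    have "2 * d * c \<le> 2 * (\<rho> * lam) * c"
      by (rule mult_right_mono) (use d(2) c in auto)
    also have "\<dots> = \<rho> * (2 * (lam * c))"
      by simp
    also have "\<dots> \<le> \<rho> * (2 * b^2 + 2 * c^2)"
      by (rule mult_left_mono) (use \<open>lam * c \<le> b^2 + c^2\<close> \<open>0 < \<rho>\<close> in auto)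
    also have "\<dots> \<le> \<rho> * (d^2 + c^2)"
      by (rule mult_left_mono) (use blocks \<open>0 < \<rho>\<close> in auto)
    finally show ?thesis .
  qed (use \<open>0 < \<rho>\<close> in simp)
  then have "(2 * d * c) / d^2 \<le> \<rho> * (d^2 + c^2) / d^2"
    by (rule divide_right_mono) simp
  moreover have "(2 * d * c) / d^2 = 2 * (c / d)"
    using d(1) by (simp add: power2_eq_square)
  moreover have "\<rho> * (d^2 + c^2) / d^2 = \<rho> * (1 + (c / d)^2)"
    using d(1) by (simp add: field_simps)
  ultimately show ?thesis
    by simp
qed

lemma incidence_sine_bound:
  fixes b c d lam \<rho> :: real
  assumes d: "0 < d" "d \<le> \<rho> * lam" and c: "0 \<le> c" and lam: "0 < lam" and \<rho>: "\<rho> < 1"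
    and blocks: "2 * b^2 + c^2 \<le> d^2" and compression: "lam * c^2 \<le> c * b^2 + c^3"
  shows "c / d \<le> 1 / sqrt 2 * (\<rho> / sqrt (1 - \<rho>^2))"
proof -
  have "0 < \<rho> * lam"
    using d by linarith
  then have "0 < \<rho>"
    using lam by (simp add: zero_less_mult_iff)
  define s where "s = sqrt (1 - \<rho>^2)"
  have s: "0 < s" "s \<le> 1"
    using \<open>0 < \<rho>\<close> \<rho> by (simp_all add: s_def abs_square_less_1)
  have "c^2 \<le> d^2"
    using blocks zero_le_power2[of b] by linarith
  then have "c \<le> d"
    by (rule power2_le_imp_le) (use d(1) in auto)
  have "c / d \<le> \<rho> / (1 + s)"
    unfolding s_def
    using incidence_quadratic_inequality[OF d c \<open>0 < \<rho>\<close> blocks compression]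
    by (rule quadratic_small_root_bound[rotated 4])
      (use \<open>0 < \<rho>\<close> \<rho> c d(1) \<open>c \<le> d\<close> in auto)
  also have "\<dots> \<le> \<rho> / (sqrt 2 * s)"
  proof -
    have "(sqrt 2 - 1) * s \<le> sqrt 2 - 1"
      using s by (simp add: mult_left_le)
    then have "sqrt 2 * s \<le> 1 + s"
      using sqrt2_less_2 by (simp add: algebra_simps)
    then show ?thesis
      by (rule divide_left_mono) (use \<open>0 < \<rho>\<close> s in auto)
  qed
  finally show ?thesis
    by (simp add: s_def)
qed

lemma nonzero_factor_if_close:
  fixes M :: "real^'n^'n" and X :: "real^'r^'n"
  assumes M: "psd M" "M \<noteq> 0" and "\<rho> < 1"
    and close: "norm (X ** transpose X - M) \<le> \<rho> * min_nonzero_eigenvalue M"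
  shows "X \<noteq> 0"
proof
  assume "X = 0"
  then have "norm M \<le> \<rho> * min_nonzero_eigenvalue M"
    using close by simp
  moreover have "\<rho> * min_nonzero_eigenvalue M < min_nonzero_eigenvalue M"
    using \<open>\<rho> < 1\<close> min_nonzero_eigenvalue_pos[OF M] by simp
  ultimately show False
    using min_nonzero_eigenvalue_le_norm[OF M] by linarith
qed

theorem lemma19:
  fixes Mstar :: "real^'n^'n" and X :: "real^'r^'n" and \<rho> \<theta> :: real
  assumes psd: "psd Mstar"
    and rank_pos: "rank Mstar \<ge> 1"
    and pos: "0 < frob_norm (X ** transpose X - Mstar)"
    and close: "frob_norm (X ** transpose X - Mstar) \<le> \<rho> * min_nonzero_eigenvalue Mstar"
    and rho: "\<rho> \<le> 1 / sqrt 2"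
    and theta_range: "0 \<le> \<theta>" "\<theta> \<le> pi / 2"
    and theta_def: "cos \<theta> = Sup ((\<lambda>Y. frob_inner (X ** transpose X - Mstar) (X ** transpose Y + Y ** transpose X)
                     / (frob_norm (X ** transpose X - Mstar) * frob_norm (X ** transpose Y + Y ** transpose X)))
                   ` {Y :: real^'r^'n. X ** transpose Y + Y ** transpose X \<noteq> 0})"
  shows "sin \<theta> = frob_norm ((mat 1 - X ** pinv X) ** Mstar ** (mat 1 - X ** pinv X))
                  / frob_norm (X ** transpose X - Mstar)
       \<and> sin \<theta> \<le> 1 / sqrt 2 * (\<rho> / sqrt (1 - \<rho>^2))"
proof -
  define E where "E = X ** transpose X - Mstar"
  define P where "P = X ** pinv X"
  define Q where "Q = mat 1 - X ** pinv X"
  define lam where "lam = min_nonzero_eigenvalue Mstar"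
  have M0: "Mstar \<noteq> 0"
    using rank_pos by (metis rank_0 not_one_le_zero)
  have d: "0 < norm E" "norm E \<le> \<rho> * lam"
    using pos close by (simp_all add: E_def lam_def frob_norm_eq_norm)
  have "\<rho> < 1" \<comment> \<open>the only use of the hypothesis on \<rho>\<close>
    using rho order_le_less_trans[of \<rho> "1 / sqrt 2" 1] by simp
  have "X \<noteq> 0"
    using nonzero_factor_if_close[OF psd M0 \<open>\<rho> < 1\<close>] d(2) unfolding E_def lam_def .
  have sin: "sin \<theta> = norm (Q ** Mstar ** Q) / norm E"
    using incidence_angle_sin_eq[OF psd_symmetric[OF psd] \<open>X \<noteq> 0\<close> _ theta_range]
      theta_def d(1) unfolding frob_inner_eq_inner frob_norm_eq_norm E_def Q_def by force
  have "2 * (norm (P ** Mstar ** Q))^2 + (norm (Q ** Mstar ** Q))^2 \<le> (norm E)^2"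
    unfolding E_def P_def Q_def by (rule residual_block_bound[OF psd_symmetric[OF psd]])
  moreover have "lam * (norm (Q ** Mstar ** Q))^2
      \<le> norm (Q ** Mstar ** Q) * (norm (P ** Mstar ** Q))^2 + (norm (Q ** Mstar ** Q))^3"
    unfolding P_def Q_def lam_def
    by (rule compression_norm_bound[OF psd min_nonzero_eigenvalue_quadratic_bound[OF psd M0]
          orthogonal_projection_matrix_pinv(1)])
  ultimately show ?thesis
    using sin incidence_sine_bound[OF d _ min_nonzero_eigenvalue_pos[OF psd M0, folded lam_def]
        \<open>\<rho> < 1\<close>]
    by (simp add: frob_norm_eq_norm E_def Q_def)
qed

end
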